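(* Let $n$ and $m$ be integers with $n\geq 2$ and $1\leq m\leq\binom{n}{2}$. A two-terminal graph $G\in T_{n,m}$ is a $1$-uniformly most reliable two-terminal graph ($1$-UMRTTG) if and only if the edge $st$ joining its terminals belongs to $G$.
   Context: All graphs are finite, simple and undirected. A two-terminal graph is a graph $G$ together with two distinguished vertices $s,t$ (the terminals). Two two-terminal graphs are isomorphic if there is a graph isomorphism between them mapping the set of terminals onto the set of terminals. $T_{n,m}$ denotes the set of all pairwise nonisomorphic two-terminal graphs with $n$ vertices and $m$ edges. For a positive integer $d$, a $d$-pathset of a two-terminal graph $G$ is a spanning subgraph of $G$ containing a path of length (number of edges) at most $d$ joining $s$ and $t$. For $\rho\in[0,1]$, $R_G^d(\rho)$ is the probability that the random spanning subgraph obtained from $G$ by deleting each edge independently with probability $\rho$ is a $d$-pathset. A graph $G\in T_{n,m}$ is a $d$-UMRTTG if $R_G^d(\rho)\geq R_H^d(\rho)$ for every $H\in T_{n,m}$ and every $\rho\in[0,1]$. *)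

theory Defs
  imports Complex_Main
begin

definition two_terminal :: "'a set \<Rightarrow> 'a set set \<Rightarrow> 'a \<Rightarrow> 'a \<Rightarrow> bool" where
  "two_terminal V E s t \<longleftrightarrow> finite V \<and>
     E \<subseteq> {{u, v} | u v. u \<in> V \<and> v \<in> V \<and> u \<noteq> v} \<and>
     s \<in> V \<and> t \<in> V \<and> s \<noteq> t"

definition is_path :: "'a set set \<Rightarrow> 'a \<Rightarrow> 'a \<Rightarrow> 'a list \<Rightarrow> bool" where
  "is_path F s t p \<longleftrightarrow> p \<noteq> [] \<and> hd p = s \<and> last p = t \<and> distinct p \<and>
     (\<forall>i. Suc i < length p \<longrightarrow> {p ! i, p ! Suc i} \<in> F)"

definition d_pathset :: "'a set set \<Rightarrow> 'a \<Rightarrow> 'a \<Rightarrow> nat \<Rightarrow> 'a set set \<Rightarrow> bool" where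
  "d_pathset E s t d F \<longleftrightarrow> F \<subseteq> E \<and> (\<exists>p. is_path F s t p \<and> length p - 1 \<le> d)"

text \<open>Probability that deleting each edge independently with probability rho
  leaves a d-pathset.\<close>
definition reliability :: "'a set set \<Rightarrow> 'a \<Rightarrow> 'a \<Rightarrow> nat \<Rightarrow> real \<Rightarrow> real" where
  "reliability E s t d \<rho> =
     (\<Sum>F \<in> {F. F \<subseteq> E \<and> d_pathset E s t d F}.
        (1 - \<rho>) ^ card F * \<rho> ^ (card E - card F))"

text \<open>Reliability is invariant under
  isomorphism, and every two-terminal graph with n vertices is isomorphic to one
  whose vertices lie in the same type as those of G (which has at least n elements),
  so comparing with all such graphs is the same as comparing with all of T_{n,m}.\<close>
definition UMRTTG :: "nat \<Rightarrow> nat \<Rightarrow> nat \<Rightarrow> 'a set \<Rightarrow> 'a set set \<Rightarrow> 'a \<Rightarrow> 'a \<Rightarrow> bool" where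
  "UMRTTG n m d V E s t \<longleftrightarrow>
     two_terminal V E s t \<and> card V = n \<and> card E = m \<and>
     (\<forall>(V'::'a set) E' s' t'. two_terminal V' E' s' t' \<and> card V' = n \<and> card E' = m \<longrightarrow>
        (\<forall>\<rho>::real. 0 \<le> \<rho> \<and> \<rho> \<le> 1 \<longrightarrow>
           reliability E s t d \<rho> \<ge> reliability E' s' t' d \<rho>))"

end

theory Submission
  imports Defs
begin

text \<open>The only s-t path of length at most 1 is the terminal edge st itself, so
  R^1_G(\<rho>) = 1 - \<rho> if st is an edge of G and R^1_G(\<rho>) = 0 otherwise. Hence all graphs
  containing st are equally reliable and dominate every other graph. Conversely, since
  1 \<le> m \<le> n choose 2, some graph in T_{n,m} contains st, and at \<rho> = 0 it beats any
  graph without st.\<close>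

lemma two_terminal_finite_edges:
  assumes "two_terminal V E s t"
  shows "finite E"
proof -
  have "E \<subseteq> Pow V" and "finite V"
    using assms unfolding two_terminal_def by auto
  then show ?thesis
    by (meson finite_Pow_iff finite_subset)
qed

lemma is_path_length_le_1_iff:
  assumes "s \<noteq> t"
  shows "(is_path F s t p \<and> length p - 1 \<le> 1) \<longleftrightarrow> p = [s, t] \<and> {s, t} \<in> F"
proof
  assume path: "is_path F s t p \<and> length p - 1 \<le> 1"
  then have "p \<noteq> []" "hd p = s" "last p = t"
    unfolding is_path_def by auto
  with assms path have "p = [s, t]"
    by (cases p rule: remdups_adj.cases) auto
  with path show "p = [s, t] \<and> {s, t} \<in> F"
    unfolding is_path_def by auto
qed (use assms in \<open>auto simp: is_path_def less_Suc_eq\<close>)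

lemma d_pathset_1_iff:
  assumes "s \<noteq> t"
  shows "d_pathset E s t 1 F \<longleftrightarrow> F \<subseteq> E \<and> {s, t} \<in> F"
  unfolding d_pathset_def using is_path_length_le_1_iff[OF assms] by blast

lemma sum_Pow_binomial:
  fixes a b :: "'b::comm_semiring_1"
  assumes "finite A"
  shows "(\<Sum>X\<in>Pow A. a ^ card X * b ^ (card A - card X)) = (a + b) ^ card A"
proof -
  have "(a + b) ^ card A = (\<Sum>X\<in>Pow A. (\<Prod>x\<in>X. a) * (\<Prod>x\<in>A - X. b))"
    using prod_add[OF assms, of "\<lambda>_. a" "\<lambda>_. b"] by simp
  also have "\<dots> = (\<Sum>X\<in>Pow A. a ^ card X * b ^ (card A - card X))"
    using assms by (intro sum.cong) (auto simp: card_Diff_subset finite_subset)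
  finally show ?thesis ..
qed

lemma sum_subsets_containing_binomial:
  fixes a b :: "'b::comm_semiring_1"
  assumes "finite E" and "e \<in> E"
  shows "(\<Sum>F | F \<subseteq> E \<and> e \<in> F. a ^ card F * b ^ (card E - card F))
           = a * (a + b) ^ (card E - 1)"
proof -
  define A where "A = E - {e}"
  have fin_A: "finite A" and card_E: "card E = Suc (card A)"
    using assms card.remove[OF assms] unfolding A_def by auto
  have subsets: "{F. F \<subseteq> E \<and> e \<in> F} = insert e ` Pow A"
  proof
    show "{F. F \<subseteq> E \<and> e \<in> F} \<subseteq> insert e ` Pow A"
    proof
      fix F assume "F \<in> {F. F \<subseteq> E \<and> e \<in> F}"
      then have "F = insert e (F - {e})" and "F - {e} \<in> Pow A"
        unfolding A_def by auto
      then show "F \<in> insert e ` Pow A" by blast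
    qed
  qed (use assms(2) in \<open>auto simp: A_def\<close>)
  have "inj_on (insert e) (Pow A)"
    unfolding A_def inj_on_def by blast
  then have "(\<Sum>F | F \<subseteq> E \<and> e \<in> F. a ^ card F * b ^ (card E - card F))
      = (\<Sum>X\<in>Pow A. a ^ card (insert e X) * b ^ (card E - card (insert e X)))"
    unfolding subsets by (rule sum.reindex_cong) auto
  also have "\<dots> = (\<Sum>X\<in>Pow A. a * (a ^ card X * b ^ (card A - card X)))"
  proof (rule sum.cong)
    fix X assume "X \<in> Pow A"
    then have "finite X" and "e \<notin> X"
      using fin_A finite_subset unfolding A_def by auto
    then have "card (insert e X) = Suc (card X)"
      by simp
    then show "a ^ card (insert e X) * b ^ (card E - card (insert e X))
        = a * (a ^ card X * b ^ (card A - card X))"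
      using card_E by (simp add: mult.assoc)
  qed simp
  also have "\<dots> = a * (a + b) ^ card A"
    unfolding sum_distrib_left[symmetric] sum_Pow_binomial[OF fin_A] ..
  finally show ?thesis
    using card_E by simp
qed

lemma reliability_1:
  assumes "s \<noteq> t" and "finite E"
  shows "reliability E s t 1 \<rho> = (if {s, t} \<in> E then 1 - \<rho> else 0)"
proof -
  have pathsets: "{F. F \<subseteq> E \<and> d_pathset E s t 1 F} = {F. F \<subseteq> E \<and> {s, t} \<in> F}"
    using d_pathset_1_iff[OF assms(1)] by blast
  show ?thesis
  proof (cases "{s, t} \<in> E")
    case True
    show ?thesis
      unfolding reliability_def pathsets
      using sum_subsets_containing_binomial[OF assms(2) True, of "1 - \<rho>" \<rho>] True by simp
  next
    case False
    then have no_pathsets: "{F. F \<subseteq> E \<and> {s, t} \<in> F} = {}"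
      by blast
    show ?thesis
      unfolding reliability_def pathsets no_pathsets using False by simp
  qed
qed

lemma two_terminal_reliability_1:
  assumes "two_terminal V E s t"
  shows "reliability E s t 1 \<rho> = (if {s, t} \<in> E then 1 - \<rho> else 0)"
proof (rule reliability_1)
  show "s \<noteq> t"
    using assms unfolding two_terminal_def by blast
qed (rule two_terminal_finite_edges[OF assms])

lemma exists_two_terminal_with_terminal_edge:
  assumes "two_terminal V E s t" and "1 \<le> m" and "m \<le> card V choose 2"
  obtains E' where "two_terminal V E' s t" and "card E' = m" and "{s, t} \<in> E'"
proof -
  define P where "P = {{u, v} | u v. u \<in> V \<and> v \<in> V \<and> u \<noteq> v}"
  have fin_V: "finite V" and st_P: "{s, t} \<in> P"
    using assms(1) unfolding two_terminal_def P_def by auto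
  have "P = {B. B \<subseteq> V \<and> card B = 2}"
    unfolding P_def by (auto simp: card_2_iff)
  then have "finite P" and "card P = card V choose 2"
    using fin_V n_subsets[OF fin_V, of 2] by auto
  then have "m - 1 \<le> card (P - {{s, t}})"
    using st_P assms(3) by simp
  then obtain S where S: "S \<subseteq> P - {{s, t}}" "card S = m - 1"
    by (meson obtain_subset_with_card_n)
  then have "finite S"
    using \<open>finite P\<close> by (meson finite_Diff finite_subset)
  show thesis
  proof
    show "two_terminal V (insert {s, t} S) s t"
      using assms(1) S(1) st_P unfolding two_terminal_def P_def by auto
    show "card (insert {s, t} S) = m"
      using S \<open>finite S\<close> assms(2) by (subst card_insert_disjoint) auto
  qed simp
qed

theorem corollary1:
  fixes n m :: nat and V :: "'a set" and E :: "'a set set" and s t :: 'a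
  assumes "n \<ge> 2" and "1 \<le> m" and "m \<le> n choose 2"
    and "two_terminal V E s t" and "card V = n" and "card E = m"
  shows "UMRTTG n m 1 V E s t \<longleftrightarrow> {s, t} \<in> E"
proof
  assume umrttg: "UMRTTG n m 1 V E s t"
  obtain E' where E': "two_terminal V E' s t" "card E' = m" "{s, t} \<in> E'"
    using exists_two_terminal_with_terminal_edge assms(2-5) by metis
  then have "\<forall>\<rho>::real. 0 \<le> \<rho> \<and> \<rho> \<le> 1 \<longrightarrow> reliability E' s t 1 \<rho> \<le> reliability E s t 1 \<rho>"
    using umrttg assms(5) unfolding UMRTTG_def by blast
  then have "reliability E' s t 1 0 \<le> reliability E s t 1 0"
    by simp
  then show "{s, t} \<in> E"
    using two_terminal_reliability_1[OF E'(1)] two_terminal_reliability_1[OF assms(4)] E'(3)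
    by (simp split: if_splits)
next
  assume "{s, t} \<in> E"
  then have "reliability E' s' t' 1 \<rho> \<le> reliability E s t 1 \<rho>"
    if "two_terminal V' E' s' t'" "\<rho> \<le> 1" for V' :: "'a set" and E' s' t' and \<rho> :: real
    using two_terminal_reliability_1[OF that(1)] two_terminal_reliability_1[OF assms(4)] that(2)
    by simp
  then show "UMRTTG n m 1 V E s t"
    using assms(4-6) unfolding UMRTTG_def by blast
qed

end
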